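(* Let $G$ be a connected graph with at least 3 vertices. Then: (a) for every automorphism $\alpha$ of $G$, $|\alpha|_t=|\alpha|+|\alpha|_e$; (b) $\theta''(G)\le \theta(G)+\theta'(G)-1$; (c) $\theta''(G)\le |V(G)|+|E(G)|-1$, with equality when $G\cong K_{1,n}$ for $n\ge 2$.
   Context: All graphs are finite and simple. For an automorphism $\alpha$ (acting on edges by $\alpha(uv)=\alpha(u)\alpha(v)$): - $|\alpha|$ is the number of cycles, including fixed points, of $\alpha$ on $V(G)$; - $|\alpha|_e$ is the number of cycles of $\alpha$ on $E(G)$; - $|\alpha|_t$ is the number of cycles of $\alpha$ acting on $V(G)\cup E(G)$. A vertex, edge, or total coloring with $k$ colors is a surjective map from $V(G)$, $E(G)$, or $V(G)\cup E(G)$ respectively onto $\{1,\dots,k\}$. It is distinguishing if only the identity automorphism preserves all colors. $\theta(G)$, $\theta'(G)$, $\theta''(G)$ denote the least $k$ such that every vertex, edge, or total coloring, respectively, using exactly $k$ colors is distinguishing. *)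

theory Defs
  imports Main
begin

definition simple_graph :: "'a set \<Rightarrow> 'a set set \<Rightarrow> bool" where
  "simple_graph V E \<longleftrightarrow> finite V \<and>
     (\<forall>e\<in>E. \<exists>u v. u \<in> V \<and> v \<in> V \<and> u \<noteq> v \<and> e = {u, v})"

definition connected_graph :: "'a set \<Rightarrow> 'a set set \<Rightarrow> bool" where
  "connected_graph V E \<longleftrightarrow>
     (\<forall>u\<in>V. \<forall>v\<in>V. (\<lambda>x y. {x, y} \<in> E)\<^sup>*\<^sup>* u v)"

definition automorphism :: "'a set \<Rightarrow> 'a set set \<Rightarrow> ('a \<Rightarrow> 'a) \<Rightarrow> bool" where
  "automorphism V E \<alpha> \<longleftrightarrow> bij_betw \<alpha> V V \<and> (\<forall>x. x \<notin> V \<longrightarrow> \<alpha> x = x) \<and>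
     (\<forall>u\<in>V. \<forall>v\<in>V. {\<alpha> u, \<alpha> v} \<in> E \<longleftrightarrow> {u, v} \<in> E)"

definition num_cycles :: "('b \<Rightarrow> 'b) \<Rightarrow> 'b set \<Rightarrow> nat" where
  "num_cycles f S = card ((\<lambda>x. {(f ^^ n) x | n. True}) ` S)"

definition edge_act :: "('a \<Rightarrow> 'a) \<Rightarrow> 'a set \<Rightarrow> 'a set" where
  "edge_act \<alpha> e = \<alpha> ` e"

(* action on V(G) \<union> E(G), realised as the disjoint union 'a + 'a set *)
fun total_act :: "('a \<Rightarrow> 'a) \<Rightarrow> 'a + 'a set \<Rightarrow> 'a + 'a set" where
  "total_act \<alpha> (Inl v) = Inl (\<alpha> v)"
| "total_act \<alpha> (Inr e) = Inr (\<alpha> ` e)"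

definition total_set :: "'a set \<Rightarrow> 'a set set \<Rightarrow> ('a + 'a set) set" where
  "total_set V E = Inl ` V \<union> Inr ` E"

definition vcycles :: "'a set \<Rightarrow> ('a \<Rightarrow> 'a) \<Rightarrow> nat" where
  "vcycles V \<alpha> = num_cycles \<alpha> V"

definition ecycles :: "'a set set \<Rightarrow> ('a \<Rightarrow> 'a) \<Rightarrow> nat" where
  "ecycles E \<alpha> = num_cycles (edge_act \<alpha>) E"

definition tcycles :: "'a set \<Rightarrow> 'a set set \<Rightarrow> ('a \<Rightarrow> 'a) \<Rightarrow> nat" where
  "tcycles V E \<alpha> = num_cycles (total_act \<alpha>) (total_set V E)"

definition coloring_with :: "'x set \<Rightarrow> ('x \<Rightarrow> nat) \<Rightarrow> nat \<Rightarrow> bool" where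
  "coloring_with X c k \<longleftrightarrow> c ` X = {1..k}"

definition distinguishing ::
  "'a set \<Rightarrow> 'a set set \<Rightarrow> (('a \<Rightarrow> 'a) \<Rightarrow> 'x \<Rightarrow> 'x) \<Rightarrow> 'x set \<Rightarrow> ('x \<Rightarrow> nat) \<Rightarrow> bool" where
  "distinguishing V E act X c \<longleftrightarrow>
     (\<forall>\<alpha>. automorphism V E \<alpha> \<longrightarrow> (\<forall>x\<in>X. c (act \<alpha> x) = c x) \<longrightarrow> (\<forall>v\<in>V. \<alpha> v = v))"

definition theta_gen ::
  "'a set \<Rightarrow> 'a set set \<Rightarrow> (('a \<Rightarrow> 'a) \<Rightarrow> 'x \<Rightarrow> 'x) \<Rightarrow> 'x set \<Rightarrow> nat" where
  "theta_gen V E act X = (LEAST k. k \<ge> 1 \<and>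
     (\<forall>c. coloring_with X c k \<longrightarrow> distinguishing V E act X c))"

definition theta_v :: "'a set \<Rightarrow> 'a set set \<Rightarrow> nat" where
  "theta_v V E = theta_gen V E (\<lambda>\<alpha>. \<alpha>) V"

definition theta_e :: "'a set \<Rightarrow> 'a set set \<Rightarrow> nat" where
  "theta_e V E = theta_gen V E edge_act E"

definition theta_t :: "'a set \<Rightarrow> 'a set set \<Rightarrow> nat" where
  "theta_t V E = theta_gen V E total_act (total_set V E)"

definition is_star :: "'a set \<Rightarrow> 'a set set \<Rightarrow> bool" where
  "is_star V E \<longleftrightarrow> card V \<ge> 3 \<and>
     (\<exists>z\<in>V. E = {{z, v} | v. v \<in> V \<and> v \<noteq> z})"

end

theory Submission
  imports Defs "HOL-Combinatorics.Transposition"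
begin

text \<open>
  The vertices and the edges are two invariant parts of the total action, so the cycles of an
  automorphism split accordingly. A coloring of \<open>V \<union> E\<close> with \<open>\<theta> + \<theta>' - 1\<close> colors uses at
  least \<open>\<theta>\<close> colors on \<open>V\<close> or at least \<open>\<theta>'\<close> colors on \<open>E\<close>; after relabelling, that part is
  colored distinguishingly, and any automorphism preserving the total coloring preserves it.
  In a connected graph with at least three vertices an automorphism fixing every edge fixes every
  vertex, so a nontrivial color-preserving automorphism forces two independent coincidences of
  colors, impossible with \<open>|V| + |E| - 1\<close> colors. In a star, swapping two leaves moves exactly two
  vertices and two edges; identifying colors along these two pairs gives non-distinguishing
  colorings with any number of colors up to \<open>|V| + |E| - 2\<close>.
\<close>

definition every_coloring_distinguishing ::
  "'a set \<Rightarrow> 'a set set \<Rightarrow> (('a \<Rightarrow> 'a) \<Rightarrow> 'x \<Rightarrow> 'x) \<Rightarrow> 'x set \<Rightarrow> nat \<Rightarrow> bool" where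
  "every_coloring_distinguishing V E act X k \<longleftrightarrow>
     (\<forall>c. coloring_with X c k \<longrightarrow> distinguishing V E act X c)"

lemma theta_gen_eq_Least:
  "theta_gen V E act X = (LEAST k. 1 \<le> k \<and> every_coloring_distinguishing V E act X k)"
  unfolding theta_gen_def every_coloring_distinguishing_def ..

lemma card_image_eq_if_coloring_with: "coloring_with X c k \<Longrightarrow> card (c ` X) = k"
  unfolding coloring_with_def by simp

lemma every_coloring_distinguishing_if_card_less:
  assumes "finite X" "card X < k"
  shows "every_coloring_distinguishing V E act X k"
  unfolding every_coloring_distinguishing_def
proof (intro allI impI)
  fix c assume "coloring_with X c k"
  then have "card (c ` X) = k" by (rule card_image_eq_if_coloring_with)
  with card_image_le[OF assms(1), of c] assms(2) show "distinguishing V E act X c" by simp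
qed

lemma theta_gen_spec:
  assumes "finite X"
  shows "1 \<le> theta_gen V E act X \<and> every_coloring_distinguishing V E act X (theta_gen V E act X)"
  unfolding theta_gen_eq_Least
  by (rule LeastI[of _ "Suc (card X)"]) (simp add: every_coloring_distinguishing_if_card_less assms)

lemma theta_gen_le:
  "1 \<le> k \<Longrightarrow> every_coloring_distinguishing V E act X k \<Longrightarrow> theta_gen V E act X \<le> k"
  unfolding theta_gen_eq_Least by (rule Least_le) simp

lemma le_theta_gen:
  assumes "finite X"
    and "\<And>k. 1 \<le> k \<Longrightarrow> k < m \<Longrightarrow> \<exists>c. coloring_with X c k \<and> \<not> distinguishing V E act X c"
  shows "m \<le> theta_gen V E act X"
  using theta_gen_spec[OF assms(1), of V E act] assms(2)
  unfolding every_coloring_distinguishing_def by (meson not_le)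

lemma ex_coloring_with_card:
  assumes "finite S"
  shows "\<exists>f :: 'b \<Rightarrow> nat. coloring_with S f (card S)"
proof -
  obtain h where "bij_betw h S {0..<card S}" using ex_bij_betw_finite_nat[OF assms] by blast
  then have "(Suc \<circ> h) ` S = Suc ` {0..<card S}"
    by (metis bij_betw_def image_comp)
  also have "\<dots> = {1..card S}"
    by (simp add: atLeastLessThanSuc_atLeastAtMost)
  finally show ?thesis unfolding coloring_with_def by blast
qed

lemma image_min_atLeastAtMost:
  "1 \<le> k \<Longrightarrow> k \<le> m \<Longrightarrow> (\<lambda>i. min i k) ` {1..m} = {(1::nat)..k}"
  by (auto simp: image_iff) (metis atLeastAtMost_iff min.absorb1 order_trans)

lemma distinguishing_transfer:
  assumes "distinguishing V E act' Y (f \<circ> c \<circ> g)"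
    and "g ` Y \<subseteq> X"
    and "\<And>\<alpha> y. y \<in> Y \<Longrightarrow> act \<alpha> (g y) = g (act' \<alpha> y)"
  shows "distinguishing V E act X c"
  using assms unfolding distinguishing_def by (metis comp_apply image_subset_iff)

lemma every_coloring_distinguishing_mono:
  assumes "every_coloring_distinguishing V E act X k" "1 \<le> k" "k \<le> m"
  shows "every_coloring_distinguishing V E act X m"
  unfolding every_coloring_distinguishing_def
proof (intro allI impI)
  fix c assume "coloring_with X c m"
  then have "((\<lambda>i. min i k) \<circ> c \<circ> id) ` X = (\<lambda>i. min i k) ` {1..m}"
    unfolding coloring_with_def by (metis comp_id image_comp)
  then have "coloring_with X ((\<lambda>i. min i k) \<circ> c \<circ> id) k"
    unfolding coloring_with_def image_min_atLeastAtMost[OF assms(2,3)] .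
  with assms(1) have "distinguishing V E act X ((\<lambda>i. min i k) \<circ> c \<circ> id)"
    unfolding every_coloring_distinguishing_def by blast
  then show "distinguishing V E act X c" by (rule distinguishing_transfer) auto
qed

lemma distinguishing_if_many_colors_on_part:
  assumes "finite Y" and many: "theta_gen V E act' Y \<le> card ((c \<circ> g) ` Y)"
    and "g ` Y \<subseteq> X"
    and "\<And>\<alpha> y. y \<in> Y \<Longrightarrow> act \<alpha> (g y) = g (act' \<alpha> y)"
  shows "distinguishing V E act X c"
proof -
  obtain f :: "nat \<Rightarrow> nat" where f: "coloring_with ((c \<circ> g) ` Y) f (card ((c \<circ> g) ` Y))"
    using ex_coloring_with_card assms(1) by blast
  then have "coloring_with Y (f \<circ> c \<circ> g) (card ((c \<circ> g) ` Y))"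
    by (simp add: coloring_with_def image_comp)
  moreover have "every_coloring_distinguishing V E act' Y (card ((c \<circ> g) ` Y))"
    using theta_gen_spec[OF assms(1)] many by (blast intro: every_coloring_distinguishing_mono)
  ultimately have "distinguishing V E act' Y (f \<circ> c \<circ> g)"
    unfolding every_coloring_distinguishing_def by blast
  then show ?thesis using assms(3,4) by (rule distinguishing_transfer)
qed

lemma funpow_map_sum:
  fixes f :: "'a \<Rightarrow> 'a" and g :: "'b \<Rightarrow> 'b"
  shows "map_sum f g ^^ n = map_sum (f ^^ n) (g ^^ n)"
proof (induction n)
  case 0 show ?case by (simp add: fun_eq_iff sum.map_ident)
next
  case (Suc n) then show ?case by (simp only: funpow.simps map_sum.comp)
qed

definition cycle_of :: "('b \<Rightarrow> 'b) \<Rightarrow> 'b \<Rightarrow> 'b set" where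
  "cycle_of f x = {(f ^^ n) x | n. True}"

lemma num_cycles_eq_card_cycle_of: "num_cycles f S = card (cycle_of f ` S)"
  unfolding num_cycles_def cycle_of_def ..

lemma cycle_of_map_sum_Inl: "cycle_of (map_sum f g) (Inl a) = Inl ` cycle_of f a"
  unfolding cycle_of_def funpow_map_sum by auto

lemma cycle_of_map_sum_Inr: "cycle_of (map_sum f g) (Inr b) = Inr ` cycle_of g b"
  unfolding cycle_of_def funpow_map_sum by auto

lemma cycle_of_self: "x \<in> cycle_of f x"
  unfolding cycle_of_def by (metis (mono_tags) funpow_0 mem_Collect_eq)

lemma num_cycles_map_sum:
  fixes f :: "'a \<Rightarrow> 'a" and g :: "'b \<Rightarrow> 'b"
  assumes "finite A" "finite B"
  shows "num_cycles (map_sum f g) (Inl ` A \<union> Inr ` B) = num_cycles f A + num_cycles g B"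
proof -
  let ?L = "image Inl ` cycle_of f ` A :: ('a + 'b) set set"
  let ?R = "image Inr ` cycle_of g ` B :: ('a + 'b) set set"
  have split: "cycle_of (map_sum f g) ` (Inl ` A \<union> Inr ` B) = ?L \<union> ?R"
    by (simp add: image_Un image_image cycle_of_map_sum_Inl cycle_of_map_sum_Inr)
  have "?L \<inter> ?R = {}"
    using cycle_of_self[of _ f] by blast
  then have "card (?L \<union> ?R) = card ?L + card ?R"
    using assms by (simp add: card_Un_disjoint)
  moreover have "card ?L = card (cycle_of f ` A)" "card ?R = card (cycle_of g ` B)"
    by (simp_all add: card_image inj_on_def inj_image_eq_iff)
  ultimately show ?thesis
    unfolding num_cycles_eq_card_cycle_of split by simp
qed

lemma total_act_eq_map_sum: "total_act \<alpha> = map_sum \<alpha> (edge_act \<alpha>)"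
proof
  fix x show "total_act \<alpha> x = map_sum \<alpha> (edge_act \<alpha>) x"
    by (cases x) (simp_all add: edge_act_def)
qed

lemma tcycles_eq_vcycles_add_ecycles:
  "finite V \<Longrightarrow> finite E \<Longrightarrow> tcycles V E \<alpha> = vcycles V \<alpha> + ecycles E \<alpha>"
  unfolding tcycles_def vcycles_def ecycles_def total_set_def total_act_eq_map_sum
  by (rule num_cycles_map_sum)

lemma finite_edges: "simple_graph V E \<Longrightarrow> finite E"
  unfolding simple_graph_def by (metis Pow_iff empty_subsetI finite_Pow_iff insert_subset rev_finite_subset subsetI)

lemma finite_total_set: "finite V \<Longrightarrow> finite E \<Longrightarrow> finite (total_set V E)"
  unfolding total_set_def by simp

lemma card_total_set: "finite V \<Longrightarrow> finite E \<Longrightarrow> card (total_set V E) = card V + card E"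
  unfolding total_set_def by (subst card_Un_disjoint) (auto simp: card_image)

lemma theta_t_le_theta_v_add_theta_e:
  assumes "finite V" "finite E"
  shows "theta_t V E \<le> theta_v V E + theta_e V E - 1"
proof -
  let ?X = "total_set V E" and ?k = "theta_v V E + theta_e V E - 1"
  have "every_coloring_distinguishing V E total_act ?X ?k"
    unfolding every_coloring_distinguishing_def
  proof (intro allI impI)
    fix c assume c: "coloring_with ?X c ?k"
    have "c ` ?X = (c \<circ> Inl) ` V \<union> (c \<circ> Inr) ` E"
      unfolding total_set_def by (simp add: image_Un image_comp)
    then have "?k \<le> card ((c \<circ> Inl) ` V) + card ((c \<circ> Inr) ` E)"
      using card_image_eq_if_coloring_with[OF c] card_Un_le by metis
    then have "theta_v V E \<le> card ((c \<circ> Inl) ` V) \<or> theta_e V E \<le> card ((c \<circ> Inr) ` E)"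
      by linarith
    then show "distinguishing V E total_act ?X c"
    proof
      assume "theta_v V E \<le> card ((c \<circ> Inl) ` V)"
      then show ?thesis unfolding theta_v_def
        by (rule distinguishing_if_many_colors_on_part[OF assms(1)]) (auto simp: total_set_def)
    next
      assume "theta_e V E \<le> card ((c \<circ> Inr) ` E)"
      then show ?thesis unfolding theta_e_def
        by (rule distinguishing_if_many_colors_on_part[OF assms(2)]) (auto simp: total_set_def edge_act_def)
    qed
  qed
  moreover have "1 \<le> ?k"
    using theta_gen_spec[OF assms(1), of V E "\<lambda>\<alpha>. \<alpha>"] theta_gen_spec[OF assms(2), of V E edge_act]
    unfolding theta_v_def theta_e_def by linarith
  ultimately show ?thesis unfolding theta_t_def by (rule theta_gen_le[rotated])
qed

lemma rtranclp_leaves_set: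
  "R\<^sup>*\<^sup>* a b \<Longrightarrow> a \<in> S \<Longrightarrow> b \<notin> S \<Longrightarrow> \<exists>p q. R p q \<and> p \<in> S \<and> q \<notin> S"
  by (induction rule: rtranclp.induct) auto

lemma ex_not_mem_if_card_less: "finite B \<Longrightarrow> card B < card A \<Longrightarrow> \<exists>x\<in>A. x \<notin> B"
  by (meson card_mono not_le subsetI)

lemma connected_graph_edge_leaving:
  assumes "connected_graph V E" "u \<in> V" "u \<in> S" "finite S" "card S < card V"
  obtains a b where "{a, b} \<in> E" "a \<in> S" "b \<notin> S"
proof -
  obtain y where "y \<in> V" "y \<notin> S" using ex_not_mem_if_card_less assms(4,5) by blast
  with assms(1-3) have "(\<lambda>x y. {x, y} \<in> E)\<^sup>*\<^sup>* u y" unfolding connected_graph_def by blast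
  from rtranclp_leaves_set[OF this \<open>u \<in> S\<close> \<open>y \<notin> S\<close>] show ?thesis
    using that by blast
qed

lemma fixes_vertices_if_fixes_edges:
  assumes conn: "connected_graph V E" and three: "3 \<le> card V"
    and fix_edges: "\<forall>e\<in>E. \<alpha> ` e = e" and "v \<in> V"
  shows "\<alpha> v = v"
proof (rule ccontr)
  assume moved: "\<alpha> v \<noteq> v"
  have fix_ends: "{\<alpha> a, \<alpha> b} = {a, b}" if "{a, b} \<in> E" for a b
    using bspec[OF fix_edges that] by simp
  obtain a q where "{a, q} \<in> E" "a \<in> {v}" "q \<notin> {v}"
    using connected_graph_edge_leaving[OF conn \<open>v \<in> V\<close>, of "{v}"] three by auto
  then have "{v, q} \<in> E" "q \<noteq> v" by auto
  then have swap: "\<alpha> v = q" "\<alpha> q = v"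
    using fix_ends[of v q] moved by (auto simp: doubleton_eq_iff)
  \<comment> \<open>an edge leaving \<open>{v, q}\<close> cannot be fixed: \<open>\<alpha>\<close> maps its end in \<open>{v, q}\<close> into \<open>{v, q}\<close> but moves it\<close>
  have "card {v, q} < card V" using \<open>q \<noteq> v\<close> three by simp
  then obtain a b where "{a, b} \<in> E" "a \<in> {v, q}" "b \<notin> {v, q}"
    using connected_graph_edge_leaving[OF conn \<open>v \<in> V\<close>, of "{v, q}"] by auto
  then have "{\<alpha> a, \<alpha> b} = {a, b}" "\<alpha> a \<in> {v, q}" "\<alpha> a \<noteq> a"
    using fix_ends[of a b] swap \<open>q \<noteq> v\<close> by auto
  then have "\<alpha> a = b" by (metis doubleton_eq_iff)
  then show False
    using \<open>\<alpha> a \<in> {v, q}\<close> \<open>b \<notin> {v, q}\<close> by simp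
qed

lemma image_Diff_singleton_eq:
  assumes "y \<in> X - {x}" "c y = c x"
  shows "c ` (X - {x}) = c ` X"
proof -
  have "c x \<in> c ` (X - {x})" using assms by (metis imageI)
  then show ?thesis by (metis Diff_empty Diff_insert0 image_insert insert_Diff insert_absorb)
qed

lemma card_image_add_two_le:
  assumes "finite X" "p \<in> X" "q \<in> X" "r \<in> X" "r' \<in> X" "p \<noteq> q" "r \<noteq> r'" "r \<notin> {p, q}"
    and "c p = c q" "c r = c r'"
  shows "card (c ` X) + 2 \<le> card X"
proof -
  define w where "w = (if r' = q then p else r')"
  have "c ` X = c ` (X - {q})"
    using assms by (intro image_Diff_singleton_eq[of p, symmetric]) auto
  also have "\<dots> = c ` (X - {q} - {r})"
    using assms by (intro image_Diff_singleton_eq[of w, symmetric]) (auto simp: w_def)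
  also have "card \<dots> \<le> card (X - {q} - {r})"
    using assms(1) by (intro card_image_le) simp
  also have "\<dots> = card X - 2"
    using assms by (simp add: card_Diff_singleton_if)
  finally show ?thesis
    using assms(1-3,6) card_mono[of X "{p, q}"] by simp
qed

lemma automorphism_mem_vertices: "automorphism V E \<alpha> \<Longrightarrow> v \<in> V \<Longrightarrow> \<alpha> v \<in> V"
  unfolding automorphism_def bij_betw_def by blast

lemma automorphism_image_mem_edges:
  assumes "simple_graph V E" "automorphism V E \<alpha>" "e \<in> E"
  shows "\<alpha> ` e \<in> E"
proof -
  obtain a b where "a \<in> V" "b \<in> V" "e = {a, b}" using assms(1,3) unfolding simple_graph_def by blast
  then show ?thesis using assms(2,3) unfolding automorphism_def by simp
qed

lemma theta_t_le_card:
  assumes G: "simple_graph V E" and conn: "connected_graph V E" and three: "3 \<le> card V"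
  shows "theta_t V E \<le> card V + card E - 1"
proof -
  let ?X = "total_set V E"
  have fin: "finite V" "finite E" using G finite_edges unfolding simple_graph_def by auto
  have "every_coloring_distinguishing V E total_act ?X (card ?X - 1)"
    unfolding every_coloring_distinguishing_def distinguishing_def
  proof (intro allI impI ballI)
    fix c \<alpha> v assume c: "coloring_with ?X c (card ?X - 1)" and aut: "automorphism V E \<alpha>"
      and preserves: "\<forall>x\<in>?X. c (total_act \<alpha> x) = c x" and "v \<in> V"
    \<comment> \<open>otherwise \<open>\<alpha>\<close> moves a vertex and an edge, forcing two coincidences of colors\<close>
    show "\<alpha> v = v"
    proof (rule ccontr)
      assume "\<alpha> v \<noteq> v"
      then obtain e where "e \<in> E" "\<alpha> ` e \<noteq> e"
        using fixes_vertices_if_fixes_edges[OF conn three _ \<open>v \<in> V\<close>] by blast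
      have mem: "Inl v \<in> ?X" "Inl (\<alpha> v) \<in> ?X" "Inr e \<in> ?X" "Inr (\<alpha> ` e) \<in> ?X"
        using \<open>v \<in> V\<close> \<open>e \<in> E\<close> automorphism_mem_vertices[OF aut] automorphism_image_mem_edges[OF G aut]
        unfolding total_set_def by auto
      have "c (Inl v) = c (Inl (\<alpha> v))" "c (Inr e) = c (Inr (\<alpha> ` e))"
        using preserves mem by (metis total_act.simps)+
      then have "card (c ` ?X) + 2 \<le> card ?X"
        using \<open>\<alpha> v \<noteq> v\<close> \<open>\<alpha> ` e \<noteq> e\<close>
        by (intro card_image_add_two_le[OF finite_total_set[OF fin] mem]) simp_all
      then show False using card_image_eq_if_coloring_with[OF c] by simp
    qed
  qed
  moreover have "1 \<le> card ?X - 1" using card_total_set[OF fin] three by simp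
  ultimately show ?thesis
    unfolding theta_t_def card_total_set[OF fin, symmetric] by (rule theta_gen_le[rotated])
qed

lemma ex_coloring_identifying_two_pairs:
  assumes "finite X" "p \<in> X" "q \<in> X" "r \<in> X" "r' \<in> X" "distinct [p, q, r, r']"
    and "1 \<le> k" "k \<le> card X - 2"
  shows "\<exists>c. coloring_with X c k \<and> c p = c q \<and> c r = c r'"
proof -
  let ?Y = "X - {q, r'}"
  define \<rho> where "\<rho> x = (if x = q then p else if x = r' then r else x)" for x
  have "\<rho> ` X = ?Y"
  proof
    show "\<rho> ` X \<subseteq> ?Y" using assms(2,4,6) by (auto simp: \<rho>_def)
    show "?Y \<subseteq> \<rho> ` X" by (force simp: \<rho>_def)
  qed
  obtain h :: "'a \<Rightarrow> nat" where h: "coloring_with ?Y h (card ?Y)"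
    using ex_coloring_with_card assms(1) by blast
  have "(\<lambda>x. min (h (\<rho> x)) k) ` X = (\<lambda>i. min i k) ` h ` \<rho> ` X"
    by (simp add: image_image)
  also have "\<dots> = (\<lambda>i. min i k) ` {1..card X - 2}"
    using h assms(1,3,5,6) \<open>\<rho> ` X = ?Y\<close> by (simp add: coloring_with_def card_Diff_subset numeral_2_eq_2)
  finally have "coloring_with X (\<lambda>x. min (h (\<rho> x)) k) k"
    unfolding coloring_with_def image_min_atLeastAtMost[OF assms(7,8)] .
  moreover have "\<rho> q = \<rho> p" "\<rho> r' = \<rho> r"
    using assms(6) by (auto simp: \<rho>_def)
  ultimately show ?thesis by (intro exI[of _ "\<lambda>x. min (h (\<rho> x)) k"]) simp
qed

lemma star_edge_iff:
  assumes "E = {{z, v} | v. v \<in> V \<and> v \<noteq> z}" "a \<in> V" "b \<in> V"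
  shows "{a, b} \<in> E \<longleftrightarrow> a \<noteq> b \<and> (a = z \<or> b = z)"
  using assms by (auto simp: doubleton_eq_iff insert_commute)

lemma automorphism_transpose_leaves:
  assumes star: "E = {{z, v} | v. v \<in> V \<and> v \<noteq> z}" and "u \<in> V - {z}" "w \<in> V - {z}"
  shows "automorphism V E (Transposition.transpose u w)"
  unfolding automorphism_def
proof (intro conjI allI impI ballI)
  show "bij_betw (Transposition.transpose u w) V V" using assms(2,3) by simp
  fix x assume "x \<notin> V"
  then show "Transposition.transpose u w x = x" using assms(2,3) by (intro transpose_apply_other) auto
next
  fix a b assume "a \<in> V" "b \<in> V"
  moreover have "Transposition.transpose u w x = z \<longleftrightarrow> x = z" for x
    using assms(2,3) by (auto simp: transpose_eq_iff)
  moreover have "Transposition.transpose u w x \<in> V" if "x \<in> V" for x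
    using assms(2,3) that by (auto simp: transpose_def)
  ultimately show "{Transposition.transpose u w a, Transposition.transpose u w b} \<in> E \<longleftrightarrow> {a, b} \<in> E"
    by (simp add: star_edge_iff[OF star] inj_eq[OF inj_transpose])
qed

lemma theta_t_ge_if_star:
  assumes "is_star V E"
  shows "card V + card E - 1 \<le> theta_t V E"
proof -
  obtain z where star: "E = {{z, v} | v. v \<in> V \<and> v \<noteq> z}" and three: "3 \<le> card V"
    using assms unfolding is_star_def by blast
  have "finite V" using three card.infinite by fastforce
  moreover have "E = (\<lambda>v. {z, v}) ` (V - {z})" using star by auto
  ultimately have fin: "finite V" "finite E" by simp_all
  obtain u where u: "u \<in> V - {z}"
    using ex_not_mem_if_card_less[where B = "{z}" and A = V] three by auto
  have "card {z, u} < card V" using three by (simp add: card_insert_if)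
  then obtain w where w: "w \<in> V - {z}" "w \<noteq> u"
    using ex_not_mem_if_card_less[where B = "{z, u}" and A = V] by auto
  let ?\<alpha> = "Transposition.transpose u w" and ?X = "total_set V E"
  have "{z, u} \<noteq> {z, w}" using u w by (auto simp: doubleton_eq_iff)
  have mem: "Inl u \<in> ?X" "Inl w \<in> ?X" "Inr {z, u} \<in> ?X" "Inr {z, w} \<in> ?X"
    using u w unfolding star total_set_def by auto
  \<comment> \<open>\<open>?\<alpha>\<close> swaps \<open>u, w\<close> and the edges \<open>zu, zw\<close>, and fixes every other vertex and edge\<close>
  have preserves: "c (total_act ?\<alpha> x) = c x"
    if same_vertex_color: "c (Inl u) = c (Inl w)" and same_edge_color: "c (Inr {z, u}) = c (Inr {z, w})"
      and "x \<in> ?X" for c :: "_ \<Rightarrow> nat" and x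
  proof (cases x)
    case (Inl t)
    then show ?thesis using same_vertex_color by (auto simp: transpose_def)
  next
    case (Inr e)
    then obtain t where "e = {z, t}" using \<open>x \<in> ?X\<close> unfolding star total_set_def by auto
    moreover have "?\<alpha> z = z" using u w by (auto simp: transpose_def)
    then have "?\<alpha> ` {z, t} = {z, ?\<alpha> t}" by (simp only: image_insert image_empty)
    ultimately show ?thesis using Inr same_edge_color by (auto simp: transpose_def)
  qed
  have "card ?X - 1 \<le> theta_gen V E total_act ?X"
  proof (rule le_theta_gen[OF finite_total_set[OF fin]])
    fix k assume "1 \<le> k" "k < card ?X - 1"
    moreover have "distinct [Inl u, Inl w, Inr {z, u}, Inr {z, w}]"
      using w(2) \<open>{z, u} \<noteq> {z, w}\<close> by auto
    ultimately obtain c where c: "coloring_with ?X c k"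
      and "c (Inl u) = c (Inl w)" "c (Inr {z, u}) = c (Inr {z, w})"
      using ex_coloring_identifying_two_pairs[OF finite_total_set[OF fin] mem] by fastforce
    then have "\<forall>x\<in>?X. c (total_act ?\<alpha> x) = c x" using preserves by blast
    moreover have "automorphism V E ?\<alpha>"
      using automorphism_transpose_leaves[OF star u w(1)] .
    ultimately have "\<not> distinguishing V E total_act ?X c"
      unfolding distinguishing_def using u w by fastforce
    with c show "\<exists>c. coloring_with ?X c k \<and> \<not> distinguishing V E total_act ?X c" by blast
  qed
  then show ?thesis unfolding theta_t_def card_total_set[OF fin] .
qed

theorem mainTheorem8:
  fixes V :: "'a set" and E :: "'a set set"
  assumes "simple_graph V E" and "connected_graph V E" and "card V \<ge> 3"
  shows "(\<forall>\<alpha>. automorphism V E \<alpha> \<longrightarrow> tcycles V E \<alpha> = vcycles V \<alpha> + ecycles E \<alpha>)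
     \<and> theta_t V E \<le> theta_v V E + theta_e V E - 1
     \<and> theta_t V E \<le> card V + card E - 1
     \<and> (is_star V E \<longrightarrow> theta_t V E = card V + card E - 1)"
proof -
  have fin: "finite V" "finite E"
    using assms(1) finite_edges unfolding simple_graph_def by auto
  have "theta_t V E \<le> card V + card E - 1"
    using assms by (rule theta_t_le_card)
  then show ?thesis
    using tcycles_eq_vcycles_add_ecycles[OF fin] theta_t_le_theta_v_add_theta_e[OF fin]
      theta_t_ge_if_star by (auto intro: antisym)
qed

end
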